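(* Let $G(\pi)=\mathcal{F}(\mu^\pi)$ be a general-utility objective with $\mathcal{F}$ concave and differentiable, and $\Gamma(\pi)=\nabla\mathcal{F}(\mu^\pi)$. For any policies $\pi,\pi'$, $$G(\pi')-G(\pi)\le\frac{1}{1-\gamma}\,\mathbb{E}_{s\sim d^{\pi'}}\Big[\big[\mathcal{T}^{\pi'}_{\Gamma(\pi)}V^\pi_{\Gamma(\pi)}\big](s)-V^\pi_{\Gamma(\pi)}(s)\Big].$$
   Context: Finite MDP: states $\mathcal{S}$, actions $\mathcal{A}$, transition kernel $\mathcal{P}$, initial distribution $\rho$, discount $\gamma\in[0,1)$. Occupancy measure $\mu^\pi(s,a)=\sum_{s_0}\rho(s_0)\sum_{\tau\ge0}\gamma^\tau\Pr^\pi[s_\tau=s,a_\tau=a\mid s_0]$; $\mathcal{K}$ the convex set of occupancy measures; $\mathcal{F}:\mathcal{K}\to\mathbb{R}$. For bounded $u$, $Q^\pi_u(s,a)=\mathbb{E}[\sum_{\tau\ge0}\gamma^\tau u(s_\tau,a_\tau)\mid s_0=s,a_0=a]$, $V^\pi_u(s)=\sum_a\pi(a\mid s)Q^\pi_u(s,a)$. Bellman operator: $[\mathcal{T}^{\pi'}_uV](s)=\sum_a\pi'(a\mid s)\big(u(s,a)+\gamma\sum_{s'}\mathcal{P}(s'\mid s,a)V(s')\big)$. Discounted state distribution: $d^{\pi'}=(1-\gamma)\rho^\top(I-\gamma P^{\pi'})^{-1}$ where $P^{\pi'}[s,s']=\sum_a\pi'(a\mid s)\mathcal{P}(s'\mid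 s,a)$. *)

theory Defs
  imports "HOL-Analysis.Analysis"
begin

text \<open>Transition kernel P s a s' = probability of moving to s' from s under a.
  A (stationary, stochastic) policy pol s a = probability of a in state s.\<close>

definition stochastic_kernel :: "('s::finite \<Rightarrow> 'a::finite \<Rightarrow> 's \<Rightarrow> real) \<Rightarrow> bool" where
  "stochastic_kernel P \<longleftrightarrow> (\<forall>s a s'. 0 \<le> P s a s') \<and> (\<forall>s a. (\<Sum>s'\<in>UNIV. P s a s') = 1)"

definition distribution :: "('s::finite \<Rightarrow> real) \<Rightarrow> bool" where
  "distribution q \<longleftrightarrow> (\<forall>s. 0 \<le> q s) \<and> (\<Sum>s\<in>UNIV. q s) = 1"

definition policy :: "('s::finite \<Rightarrow> 'a::finite \<Rightarrow> real) \<Rightarrow> bool" where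
  "policy pol \<longleftrightarrow> (\<forall>s a. 0 \<le> pol s a) \<and> (\<forall>s. (\<Sum>a\<in>UNIV. pol s a) = 1)"

text \<open>One step of the state-action Markov chain induced by pol:
  q is the joint law of (s_t, a_t), the result is the law of (s_{t+1}, a_{t+1}).\<close>
definition sa_step :: "('s::finite \<Rightarrow> 'a::finite \<Rightarrow> 's \<Rightarrow> real) \<Rightarrow> ('s \<Rightarrow> 'a \<Rightarrow> real)
    \<Rightarrow> ('s \<times> 'a \<Rightarrow> real) \<Rightarrow> ('s \<times> 'a \<Rightarrow> real)" where
  "sa_step P pol q = (\<lambda>(s', a'). \<Sum>z\<in>UNIV. q z * P (fst z) (snd z) s' * pol s' a')"

definition sa_dist :: "('s::finite \<Rightarrow> 'a::finite \<Rightarrow> 's \<Rightarrow> real) \<Rightarrow> ('s \<Rightarrow> 'a \<Rightarrow> real)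
    \<Rightarrow> ('s \<times> 'a \<Rightarrow> real) \<Rightarrow> nat \<Rightarrow> ('s \<times> 'a \<Rightarrow> real)" where
  "sa_dist P pol q tau = (sa_step P pol ^^ tau) q"

definition occ :: "('s::finite \<Rightarrow> 'a::finite \<Rightarrow> 's \<Rightarrow> real) \<Rightarrow> ('s \<Rightarrow> real) \<Rightarrow> real
    \<Rightarrow> ('s \<Rightarrow> 'a \<Rightarrow> real) \<Rightarrow> real ^ ('s \<times> 'a)" where
  "occ P rho \<gamma> pol = (\<chi> z. \<Sum>s0\<in>UNIV. rho s0 *
      (\<Sum>tau. \<gamma> ^ tau * sa_dist P pol (\<lambda>(x, b). if x = s0 then pol s0 b else 0) tau z))"

definition occ_set :: "('s::finite \<Rightarrow> 'a::finite \<Rightarrow> 's \<Rightarrow> real) \<Rightarrow> ('s \<Rightarrow> real) \<Rightarrow> real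
    \<Rightarrow> (real ^ ('s \<times> 'a)) set" where
  "occ_set P rho \<gamma> = {occ P rho \<gamma> pol | pol. policy pol}"

definition Qfun :: "('s::finite \<Rightarrow> 'a::finite \<Rightarrow> 's \<Rightarrow> real) \<Rightarrow> real \<Rightarrow> ('s \<Rightarrow> 'a \<Rightarrow> real)
    \<Rightarrow> ('s \<times> 'a \<Rightarrow> real) \<Rightarrow> 's \<Rightarrow> 'a \<Rightarrow> real" where
  "Qfun P \<gamma> pol u s a = (\<Sum>tau. \<gamma> ^ tau *
      (\<Sum>z\<in>UNIV. sa_dist P pol (\<lambda>z'. if z' = (s, a) then 1 else 0) tau z * u z))"

definition Vfun :: "('s::finite \<Rightarrow> 'a::finite \<Rightarrow> 's \<Rightarrow> real) \<Rightarrow> real \<Rightarrow> ('s \<Rightarrow> 'a \<Rightarrow> real)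
    \<Rightarrow> ('s \<times> 'a \<Rightarrow> real) \<Rightarrow> 's \<Rightarrow> real" where
  "Vfun P \<gamma> pol u s = (\<Sum>a\<in>UNIV. pol s a * Qfun P \<gamma> pol u s a)"

definition bellman :: "('s::finite \<Rightarrow> 'a::finite \<Rightarrow> 's \<Rightarrow> real) \<Rightarrow> real \<Rightarrow> ('s \<Rightarrow> 'a \<Rightarrow> real)
    \<Rightarrow> ('s \<times> 'a \<Rightarrow> real) \<Rightarrow> ('s \<Rightarrow> real) \<Rightarrow> 's \<Rightarrow> real" where
  "bellman P \<gamma> pol' u V s = (\<Sum>a\<in>UNIV. pol' s a * (u (s, a) + \<gamma> * (\<Sum>s'\<in>UNIV. P s a s' * V s')))"

definition Pmat :: "('s::finite \<Rightarrow> 'a::finite \<Rightarrow> 's \<Rightarrow> real) \<Rightarrow> ('s \<Rightarrow> 'a \<Rightarrow> real) \<Rightarrow> real ^ 's ^ 's" where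
  "Pmat P pol' = (\<chi> s s'. \<Sum>a\<in>UNIV. pol' s a * P s a s')"

definition dstate :: "('s::finite \<Rightarrow> 'a::finite \<Rightarrow> 's \<Rightarrow> real) \<Rightarrow> ('s \<Rightarrow> real) \<Rightarrow> real
    \<Rightarrow> ('s \<Rightarrow> 'a \<Rightarrow> real) \<Rightarrow> real ^ 's" where
  "dstate P rho \<gamma> pol' = (1 - \<gamma>) *\<^sub>R ((\<chi> s. rho s) v* matrix_inv (mat 1 - \<gamma> *\<^sub>R Pmat P pol'))"

end

theory Submission
  imports Defs
begin

text \<open>
  Write \<open>\<mu>\<close>, \<open>\<mu>'\<close> for the occupancy measures of \<open>\<pi>\<close>, \<open>\<pi>'\<close>, \<open>u = \<nabla>F(\<mu>)\<close> and
  \<open>V = V^\<pi>_u\<close>.  Concavity bounds \<open>F(\<mu>') - F(\<mu>)\<close> by \<open>\<langle>u, \<mu>' - \<mu>\<rangle>\<close>.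
  Expanding \<open>\<mu>\<close> along trajectories started from \<open>\<rho>\<close> gives \<open>\<langle>u, \<mu>\<rangle> = \<rho>^T V\<close>.
  The occupancy measure of \<open>\<pi>'\<close> factors as \<open>\<mu>'(s,a) = w(s) \<pi>'(a|s)\<close>, where
  \<open>w = \<rho>^T (I - \<gamma> P^\<pi>')^-1\<close> is the unique solution of \<open>w = \<rho> + \<gamma> w P^\<pi>'\<close>, so
  \<open>\<langle>u, \<mu>'\<rangle> = w^T r\<close> with \<open>r(s) = \<Sum>a. \<pi>'(a|s) u(s,a)\<close>.  The same equation for \<open>w\<close>
  turns \<open>w^T r - \<rho>^T V\<close> into \<open>w^T (r + \<gamma> P^\<pi>' V - V) = w^T (T^\<pi>'_u V - V)\<close>,
  and \<open>d^\<pi>' = (1 - \<gamma>) w\<close>.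
\<close>

lemma concave_on_imp_below_tangent:
  fixes F :: "'v::real_normed_vector \<Rightarrow> real"
  assumes concave: "concave_on S F" and "x \<in> S" "y \<in> S"
    and deriv: "(F has_derivative F') (at x within S)"
  shows "F y - F x \<le> F' (y - x)"
proof -
  define p where "p t = x + t *\<^sub>R (y - x)" for t :: real
  have p_convex: "p t = (1 - t) *\<^sub>R x + t *\<^sub>R y" for t
    by (simp add: p_def algebra_simps)
  have "p ` {0<..<1} \<subseteq> S"
    using concave_on_imp_convex[OF concave] \<open>x \<in> S\<close> \<open>y \<in> S\<close> by (auto simp: p_convex convex_alt)
  then have "(F has_derivative F') (at (p 0) within p ` {0<..<1})"
    by (auto simp: p_def intro: has_derivative_subset[OF deriv])
  moreover have "(p has_derivative (\<lambda>t. t *\<^sub>R (y - x))) (at 0 within {0<..<1})"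
    unfolding p_def by (auto intro!: derivative_eq_intros)
  ultimately have "((F \<circ> p) has_derivative (\<lambda>t. F' (t *\<^sub>R (y - x)))) (at 0 within {0<..<1})"
    using diff_chain_within by (auto simp: o_def)
  then have "((F \<circ> p) has_field_derivative F' (y - x)) (at 0 within {0<..<1})"
    using has_derivative_bounded_linear[OF deriv]
    by (simp add: has_field_derivative_def linear_simps mult_commute_abs)
  then have "((\<lambda>t. (F (p t) - F (p 0)) / t) \<longlongrightarrow> F' (y - x)) (at 0 within {0<..<1})"
    by (simp add: has_field_derivative_iff)
  moreover have "\<forall>\<^sub>F t in at 0 within {0<..<1}. F y - F x \<le> (F (p t) - F (p 0)) / t"
    unfolding eventually_at_filter
  proof (intro always_eventually allI impI)
    fix t :: real assume "t \<in> {0<..<1}"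
    then have "(1 - t) * F x + t * F y \<le> F (p t)"
      using concave_onD[OF concave, of t x y] \<open>x \<in> S\<close> \<open>y \<in> S\<close> by (simp add: p_convex)
    then have "t * (F y - F x) \<le> F (p t) - F (p 0)"
      by (simp add: p_def algebra_simps)
    with \<open>t \<in> {0<..<1}\<close> show "F y - F x \<le> (F (p t) - F (p 0)) / t"
      by (simp add: pos_le_divide_eq mult.commute)
  qed
  moreover have "at (0::real) within {0<..<1} \<noteq> bot"
    by (simp add: trivial_limit_within islimpt_greaterThanLessThan1)
  ultimately show ?thesis
    by (rule tendsto_lowerbound)
qed

lemma invertible_mat_1_minus_scaleR:
  fixes M :: "real ^ 'n ^ 'n"
  assumes row_sum: "\<And>i. (\<Sum>j\<in>UNIV. \<bar>M $ i $ j\<bar>) \<le> 1" and "\<bar>\<gamma>\<bar> < 1"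
  shows "invertible (mat 1 - \<gamma> *\<^sub>R M)"
proof -
  have "x = 0" if "(mat 1 - \<gamma> *\<^sub>R M) *v x = 0" for x
  proof -
    have x_eq: "x = \<gamma> *\<^sub>R (M *v x)"
      using that by (simp add: matrix_vector_mult_diff_rdistrib scaleR_matrix_vector_assoc)
    define m where "m = Max (range (\<lambda>j. \<bar>x $ j\<bar>))"
    have le_m: "\<bar>x $ j\<bar> \<le> m" for j
      unfolding m_def by (rule Max_ge) auto
    obtain i where i: "m = \<bar>x $ i\<bar>"
      using Max_in[of "range (\<lambda>j. \<bar>x $ j\<bar>)"] unfolding m_def by fastforce
    have "m = \<bar>\<gamma>\<bar> * \<bar>\<Sum>j\<in>UNIV. M $ i $ j * x $ j\<bar>"
      using arg_cong[OF x_eq, of "\<lambda>v. \<bar>v $ i\<bar>"] by (simp add: i abs_mult matrix_vector_mult_def)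
    also have "\<dots> \<le> \<bar>\<gamma>\<bar> * (\<Sum>j\<in>UNIV. \<bar>M $ i $ j\<bar> * m)"
      by (intro mult_left_mono order.trans[OF sum_abs] sum_mono)
        (auto simp: abs_mult intro: mult_left_mono le_m)
    also have "\<dots> \<le> \<bar>\<gamma>\<bar> * m"
      using row_sum[of i] by (auto simp: i sum_distrib_right[symmetric] intro!: mult_left_mono mult_left_le_one_le)
    finally have "m \<le> \<bar>\<gamma>\<bar> * m" .
    then have "m = 0"
      using \<open>\<bar>\<gamma>\<bar> < 1\<close> by (auto simp: i mult_le_cancel_right1)
    then show "x = 0"
      using le_m by (simp add: vec_eq_iff)
  qed
  then show ?thesis
    by (simp add: invertible_left_inverse matrix_left_invertible_ker)
qed

lemma eq_vector_matrix_mult_matrix_inv_iff: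
  fixes A :: "'a::field ^ 'n ^ 'n"
  assumes "invertible A"
  shows "y = b v* matrix_inv A \<longleftrightarrow> y v* A = b"
proof -
  have inv: "A ** matrix_inv A = mat 1" "matrix_inv A ** A = mat 1"
    using someI_ex[of "\<lambda>A'. A ** A' = mat 1 \<and> A' ** A = mat 1"] assms
    by (auto simp: invertible_def matrix_inv_def)
  show ?thesis
    by (metis inv vector_matrix_mul_assoc vector_matrix_mul_rid)
qed

lemma inner_bellman_residual:
  fixes w b r v :: "real ^ 'n" and M :: "real ^ 'n ^ 'n"
  assumes "w = b + \<gamma> *\<^sub>R (w v* M)"
  shows "w \<bullet> (r + \<gamma> *\<^sub>R (M *v v) - v) = w \<bullet> r - b \<bullet> v"
proof -
  have "w \<bullet> (\<gamma> *\<^sub>R (M *v v)) = (w - b) \<bullet> v"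
    by (subst (2) assms) (simp add: dot_lmul_matrix)
  then show ?thesis
    by (simp add: inner_add_right inner_diff_right inner_diff_left)
qed

lemma sum_UNIV_prod:
  "(\<Sum>z\<in>(UNIV :: ('s::finite \<times> 'a::finite) set). f z) = (\<Sum>s\<in>UNIV. \<Sum>a\<in>UNIV. f (s, a))"
  by (simp add: sum.cartesian_product UNIV_Times_UNIV[symmetric] del: UNIV_Times_UNIV)

lemma summable_geometric_times_bounded:
  fixes f :: "nat \<Rightarrow> real"
  assumes "\<bar>\<gamma>\<bar> < 1" and "\<And>n. \<bar>f n\<bar> \<le> B"
  shows "summable (\<lambda>n. \<gamma> ^ n * f n)"
proof (rule summable_comparison_test)
  show "\<exists>N. \<forall>n\<ge>N. norm (\<gamma> ^ n * f n) \<le> B * \<bar>\<gamma>\<bar> ^ n"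
    using assms(2) by (auto simp: abs_mult power_abs mult.commute intro!: mult_right_mono)
  show "summable (\<lambda>n. B * \<bar>\<gamma>\<bar> ^ n)"
    using assms(1) by (intro summable_mult summable_geometric) auto
qed

lemma sa_step_apply:
  "sa_step P pol q z = (\<Sum>z'\<in>UNIV. q z' * P (fst z') (snd z') (fst z) * pol (fst z) (snd z))"
  by (cases z) (simp add: sa_step_def)

lemma sa_dist_0 [simp]: "sa_dist P pol q 0 = q"
  by (simp add: sa_dist_def)

lemma sa_dist_Suc: "sa_dist P pol q (Suc n) = sa_step P pol (sa_dist P pol q n)"
  by (simp add: sa_dist_def)

lemma sa_step_sum:
  "sa_step P pol (\<lambda>z. \<Sum>i\<in>I. c i * q i z) = (\<lambda>z. \<Sum>i\<in>I. c i * sa_step P pol (q i) z)"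
  by (rule ext) (simp add: sa_step_apply sum_distrib_left sum_distrib_right mult.assoc sum.swap[of _ I])

lemma sa_dist_sum:
  "sa_dist P pol (\<lambda>z. \<Sum>i\<in>I. c i * q i z) n = (\<lambda>z. \<Sum>i\<in>I. c i * sa_dist P pol (q i) n z)"
  by (induction n) (simp_all add: sa_dist_Suc sa_step_sum)

lemma sum_abs_sa_step_le:
  assumes "stochastic_kernel P" and "policy pol"
  shows "(\<Sum>z\<in>UNIV. \<bar>sa_step P pol q z\<bar>) \<le> (\<Sum>z\<in>UNIV. \<bar>q z\<bar>)"
proof -
  have P: "\<And>s a s'. 0 \<le> P s a s'" "\<And>s a. (\<Sum>s'\<in>UNIV. P s a s') = 1"
    using assms(1) by (auto simp: stochastic_kernel_def)
  have pol: "\<And>s a. 0 \<le> pol s a" "\<And>s. (\<Sum>a\<in>UNIV. pol s a) = 1"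
    using assms(2) by (auto simp: policy_def)
  have "(\<Sum>z\<in>UNIV. \<bar>sa_step P pol q z\<bar>)
      \<le> (\<Sum>z\<in>UNIV. \<Sum>z'\<in>UNIV. \<bar>q z'\<bar> * P (fst z') (snd z') (fst z) * pol (fst z) (snd z))"
    unfolding sa_step_apply
    by (intro sum_mono order.trans[OF sum_abs]) (simp add: abs_mult P pol)
  also have "\<dots> = (\<Sum>z'\<in>UNIV. \<bar>q z'\<bar> * (\<Sum>s\<in>UNIV. P (fst z') (snd z') s * (\<Sum>a\<in>UNIV. pol s a)))"
    by (subst sum.swap) (simp add: sum_UNIV_prod sum_distrib_left mult.assoc)
  also have "\<dots> = (\<Sum>z\<in>UNIV. \<bar>q z\<bar>)"
    by (simp add: P pol)
  finally show ?thesis .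
qed

lemma abs_sa_dist_le:
  assumes "stochastic_kernel P" and "policy pol"
  shows "\<bar>sa_dist P pol q n z\<bar> \<le> (\<Sum>z\<in>UNIV. \<bar>q z\<bar>)"
proof -
  have "(\<Sum>z\<in>UNIV. \<bar>sa_dist P pol q n z\<bar>) \<le> (\<Sum>z\<in>UNIV. \<bar>q z\<bar>)"
    by (induction n) (auto simp: sa_dist_Suc intro: order.trans[OF sum_abs_sa_step_le[OF assms]])
  then show ?thesis
    by (meson order.trans member_le_sum abs_ge_zero finite UNIV_I)
qed

definition discounted_sa_dist :: "('s::finite \<Rightarrow> 'a::finite \<Rightarrow> 's \<Rightarrow> real) \<Rightarrow> ('s \<Rightarrow> 'a \<Rightarrow> real)
    \<Rightarrow> real \<Rightarrow> ('s \<times> 'a \<Rightarrow> real) \<Rightarrow> 's \<times> 'a \<Rightarrow> real" where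
  "discounted_sa_dist P pol \<gamma> q z = (\<Sum>\<tau>. \<gamma> ^ \<tau> * sa_dist P pol q \<tau> z)"

definition state_occ :: "('s::finite \<Rightarrow> 'a::finite \<Rightarrow> 's \<Rightarrow> real) \<Rightarrow> ('s \<Rightarrow> real) \<Rightarrow> real
    \<Rightarrow> ('s \<Rightarrow> 'a \<Rightarrow> real) \<Rightarrow> real ^ 's" where
  "state_occ P rho \<gamma> pol = (\<chi> s. rho s) v* matrix_inv (mat 1 - \<gamma> *\<^sub>R Pmat P pol)"

lemma dstate_eq_state_occ: "dstate P rho \<gamma> pol = (1 - \<gamma>) *\<^sub>R state_occ P rho \<gamma> pol"
  by (simp add: dstate_def state_occ_def)

lemma bellman_eq_Pmat:
  "bellman P \<gamma> pol u V s = (\<Sum>a\<in>UNIV. pol s a * u (s, a)) + \<gamma> * (Pmat P pol *v (\<chi> s. V s)) $ s"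
proof -
  have "(\<Sum>a\<in>UNIV. pol s a * (\<gamma> * (\<Sum>s'\<in>UNIV. P s a s' * V s')))
      = \<gamma> * (\<Sum>a\<in>UNIV. \<Sum>s'\<in>UNIV. pol s a * P s a s' * V s')"
    by (simp add: sum_distrib_left mult_ac)
  also have "\<dots> = \<gamma> * (\<Sum>s'\<in>UNIV. (\<Sum>a\<in>UNIV. pol s a * P s a s') * V s')"
    by (subst sum.swap) (simp add: sum_distrib_right)
  finally show ?thesis
    by (simp add: bellman_def Pmat_def matrix_vector_mult_def distrib_left sum.distrib)
qed

context
  fixes P :: "'s::finite \<Rightarrow> 'a::finite \<Rightarrow> 's \<Rightarrow> real" and pol :: "'s \<Rightarrow> 'a \<Rightarrow> real" and \<gamma> :: real
  assumes kernel: "stochastic_kernel P" and policy: "policy pol" and discount: "\<bar>\<gamma>\<bar> < 1"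
begin

lemma sums_discounted_sa_dist:
  "(\<lambda>\<tau>. \<gamma> ^ \<tau> * sa_dist P pol q \<tau> z) sums discounted_sa_dist P pol \<gamma> q z"
  unfolding discounted_sa_dist_def
  by (intro summable_sums summable_geometric_times_bounded[OF discount abs_sa_dist_le[OF kernel policy]])

lemma discounted_sa_dist_sum:
  "discounted_sa_dist P pol \<gamma> (\<lambda>z. \<Sum>i\<in>I. c i * q i z) z
    = (\<Sum>i\<in>I. c i * discounted_sa_dist P pol \<gamma> (q i) z)"
proof -
  have "(\<lambda>\<tau>. \<Sum>i\<in>I. c i * (\<gamma> ^ \<tau> * sa_dist P pol (q i) \<tau> z))
      sums (\<Sum>i\<in>I. c i * discounted_sa_dist P pol \<gamma> (q i) z)"
    by (intro sums_sum sums_mult sums_discounted_sa_dist)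
  then have "(\<lambda>\<tau>. \<gamma> ^ \<tau> * sa_dist P pol (\<lambda>z. \<Sum>i\<in>I. c i * q i z) \<tau> z)
      sums (\<Sum>i\<in>I. c i * discounted_sa_dist P pol \<gamma> (q i) z)"
    by (simp add: sa_dist_sum sum_distrib_left mult.left_commute)
  from sums_unique2[OF sums_discounted_sa_dist this] show ?thesis .
qed

lemma discounted_sa_dist_fixpoint:
  "discounted_sa_dist P pol \<gamma> q z = q z + \<gamma> * sa_step P pol (discounted_sa_dist P pol \<gamma> q) z"
proof -
  have "(\<lambda>\<tau>. \<gamma> * (\<Sum>z'\<in>UNIV. \<gamma> ^ \<tau> * sa_dist P pol q \<tau> z' * (P (fst z') (snd z') (fst z) * pol (fst z) (snd z))))
      sums (\<gamma> * (\<Sum>z'\<in>UNIV. discounted_sa_dist P pol \<gamma> q z' * (P (fst z') (snd z') (fst z) * pol (fst z) (snd z))))"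
    by (intro sums_mult sums_sum sums_mult2 sums_discounted_sa_dist)
  then have "(\<lambda>\<tau>. \<gamma> ^ Suc \<tau> * sa_dist P pol q (Suc \<tau>) z)
      sums (\<gamma> * sa_step P pol (discounted_sa_dist P pol \<gamma> q) z)"
    by (simp add: sa_dist_Suc sa_step_apply sum_distrib_left mult_ac)
  then have "(\<lambda>\<tau>. \<gamma> ^ \<tau> * sa_dist P pol q \<tau> z)
      sums (\<gamma> * sa_step P pol (discounted_sa_dist P pol \<gamma> q) z + q z)"
    using sums_Suc_iff[of "\<lambda>\<tau>. \<gamma> ^ \<tau> * sa_dist P pol q \<tau> z"] by simp
  from sums_unique2[OF sums_discounted_sa_dist this] show ?thesis
    by simp
qed

lemma Qfun_eq_discounted_sa_dist:
  "Qfun P \<gamma> pol u s a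
    = (\<Sum>z\<in>UNIV. discounted_sa_dist P pol \<gamma> (\<lambda>z'. if z' = (s, a) then 1 else 0) z * u z)"
proof -
  have "(\<lambda>\<tau>. \<Sum>z\<in>UNIV. \<gamma> ^ \<tau> * sa_dist P pol (\<lambda>z'. if z' = (s, a) then 1 else 0) \<tau> z * u z)
      sums (\<Sum>z\<in>UNIV. discounted_sa_dist P pol \<gamma> (\<lambda>z'. if z' = (s, a) then 1 else 0) z * u z)"
    by (intro sums_sum sums_mult2 sums_discounted_sa_dist)
  then show ?thesis
    unfolding Qfun_def by (simp add: sum_distrib_left mult.assoc sums_iff)
qed

lemma occ_eq_discounted_sa_dist:
  "occ P rho \<gamma> pol $ z = discounted_sa_dist P pol \<gamma> (\<lambda>(s, a). rho s * pol s a) z"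
proof -
  define q where "q s0 = (\<lambda>(s, a). if s = s0 then pol s0 a else 0)" for s0
  have "occ P rho \<gamma> pol $ z = (\<Sum>s0\<in>UNIV. rho s0 * discounted_sa_dist P pol \<gamma> (q s0) z)"
    by (simp add: occ_def discounted_sa_dist_def q_def)
  also have "\<dots> = discounted_sa_dist P pol \<gamma> (\<lambda>z. \<Sum>s0\<in>UNIV. rho s0 * q s0 z) z"
    by (rule discounted_sa_dist_sum[symmetric])
  also have "(\<lambda>z. \<Sum>s0\<in>UNIV. rho s0 * q s0 z) = (\<lambda>(s, a). rho s * pol s a)"
    by (auto simp: q_def if_distrib[of "\<lambda>c. _ * c"] cong: if_cong)
  finally show ?thesis .
qed

lemma inner_occ_eq_Vfun:
  "g \<bullet> occ P rho \<gamma> pol = (\<chi> s. rho s) \<bullet> (\<chi> s. Vfun P \<gamma> pol (\<lambda>z. g $ z) s)"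
proof -
  define c where "c = (\<lambda>(s, a). rho s * pol s a)"
  define e where "e z0 = (\<lambda>z. if z = z0 then 1 else (0::real))" for z0 :: "'s \<times> 'a"
  have c_expand: "c = (\<lambda>z. \<Sum>z0\<in>UNIV. c z0 * e z0 z)"
    by (simp add: e_def if_distrib[of "\<lambda>x. _ * x"] cong: if_cong)
  have "occ P rho \<gamma> pol $ z = (\<Sum>z0\<in>UNIV. c z0 * discounted_sa_dist P pol \<gamma> (e z0) z)" for z
    unfolding occ_eq_discounted_sa_dist c_def[symmetric]
    by (subst (1) c_expand) (rule discounted_sa_dist_sum)
  then have "g \<bullet> occ P rho \<gamma> pol = (\<Sum>z\<in>UNIV. \<Sum>z0\<in>UNIV. c z0 * (discounted_sa_dist P pol \<gamma> (e z0) z * g $ z))"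
    by (simp add: inner_vec_def sum_distrib_left mult_ac)
  also have "\<dots> = (\<Sum>z0\<in>UNIV. c z0 * (\<Sum>z\<in>UNIV. discounted_sa_dist P pol \<gamma> (e z0) z * g $ z))"
    by (subst sum.swap) (simp add: sum_distrib_left)
  also have "\<dots> = (\<chi> s. rho s) \<bullet> (\<chi> s. Vfun P \<gamma> pol (\<lambda>z. g $ z) s)"
    by (simp add: sum_UNIV_prod inner_vec_def Vfun_def Qfun_eq_discounted_sa_dist c_def e_def
        sum_distrib_left mult_ac)
  finally show ?thesis .
qed

lemma sum_abs_Pmat_row: "(\<Sum>s'\<in>UNIV. \<bar>Pmat P pol $ s $ s'\<bar>) = 1"
proof -
  have "0 \<le> Pmat P pol $ s $ s'" for s'
    using kernel policy by (auto simp: Pmat_def stochastic_kernel_def policy_def intro: sum_nonneg)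
  then have "(\<Sum>s'\<in>UNIV. \<bar>Pmat P pol $ s $ s'\<bar>) = (\<Sum>s'\<in>UNIV. \<Sum>a\<in>UNIV. pol s a * P s a s')"
    by (simp add: Pmat_def)
  also have "\<dots> = (\<Sum>a\<in>UNIV. pol s a * (\<Sum>s'\<in>UNIV. P s a s'))"
    by (subst sum.swap) (simp add: sum_distrib_left)
  also have "\<dots> = 1"
    using kernel policy by (simp add: stochastic_kernel_def policy_def)
  finally show ?thesis .
qed

lemma eq_state_occ_iff:
  "y = state_occ P rho \<gamma> pol \<longleftrightarrow> y = (\<chi> s. rho s) + \<gamma> *\<^sub>R (y v* Pmat P pol)"
proof -
  have "invertible (mat 1 - \<gamma> *\<^sub>R Pmat P pol)"
    by (rule invertible_mat_1_minus_scaleR) (simp_all add: sum_abs_Pmat_row discount)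
  then show ?thesis
    by (auto simp: state_occ_def eq_vector_matrix_mult_matrix_inv_iff vector_matrix_mult_diff_rdistrib
        vector_scaleR_matrix_ac diff_eq_eq)
qed

lemma state_occ_fixpoint:
  "state_occ P rho \<gamma> pol = (\<chi> s. rho s) + \<gamma> *\<^sub>R (state_occ P rho \<gamma> pol v* Pmat P pol)"
  using eq_state_occ_iff by blast

lemma occ_factorization: "occ P rho \<gamma> pol $ (s, a) = state_occ P rho \<gamma> pol $ s * pol s a"
proof -
  define w where "w = (\<chi> s. rho s + \<gamma> * (\<Sum>z\<in>UNIV. occ P rho \<gamma> pol $ z * P (fst z) (snd z) s))"
  have occ_w: "occ P rho \<gamma> pol $ (s, a) = w $ s * pol s a" for s a
    using discounted_sa_dist_fixpoint[of "\<lambda>(s, a). rho s * pol s a" "(s, a)"]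
    by (simp add: occ_eq_discounted_sa_dist[symmetric] sa_step_apply w_def algebra_simps
        sum_distrib_left sum_distrib_right)
  have "w v* Pmat P pol = (\<chi> s. \<Sum>z\<in>UNIV. occ P rho \<gamma> pol $ z * P (fst z) (snd z) s)"
    by (simp add: vec_eq_iff vector_matrix_mult_def Pmat_def sum_UNIV_prod occ_w
        sum_distrib_left sum_distrib_right mult_ac)
  moreover have "w $ s = rho s + \<gamma> * (\<Sum>z\<in>UNIV. occ P rho \<gamma> pol $ z * P (fst z) (snd z) s)" for s
    by (simp add: w_def)
  ultimately have "w = (\<chi> s. rho s) + \<gamma> *\<^sub>R (w v* Pmat P pol)"
    by (simp add: vec_eq_iff)
  then have "w = state_occ P rho \<gamma> pol"
    by (simp only: eq_state_occ_iff)
  then show ?thesis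
    using occ_w by simp
qed

lemma inner_occ_eq_state_occ:
  "g \<bullet> occ P rho \<gamma> pol = state_occ P rho \<gamma> pol \<bullet> (\<chi> s. \<Sum>a\<in>UNIV. pol s a * g $ (s, a))"
  by (simp add: inner_vec_def sum_UNIV_prod occ_factorization sum_distrib_left mult_ac)

end

theorem lemma16:
  fixes P :: "'s::finite \<Rightarrow> 'a::finite \<Rightarrow> 's \<Rightarrow> real"
    and rho :: "'s \<Rightarrow> real"
    and \<gamma> :: real
    and F :: "real ^ ('s \<times> 'a) \<Rightarrow> real"
    and Grad :: "real ^ ('s \<times> 'a) \<Rightarrow> real ^ ('s \<times> 'a)"
    and pol pol' :: "'s \<Rightarrow> 'a \<Rightarrow> real"
  assumes "stochastic_kernel P"
    and "distribution rho"
    and "0 \<le> \<gamma>" and "\<gamma> < 1"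
    and "policy pol" and "policy pol'"
    and "concave_on (occ_set P rho \<gamma>) F"
    and "\<forall>x\<in>occ_set P rho \<gamma>. (F has_derivative (\<lambda>h. Grad x \<bullet> h)) (at x within occ_set P rho \<gamma>)"
  shows "F (occ P rho \<gamma> pol') - F (occ P rho \<gamma> pol)
    \<le> 1 / (1 - \<gamma>) * (\<Sum>s\<in>UNIV. dstate P rho \<gamma> pol' $ s *
         (bellman P \<gamma> pol' (\<lambda>z. Grad (occ P rho \<gamma> pol) $ z) (Vfun P \<gamma> pol (\<lambda>z. Grad (occ P rho \<gamma> pol) $ z)) s
          - Vfun P \<gamma> pol (\<lambda>z. Grad (occ P rho \<gamma> pol) $ z) s))"
proof -
  define \<mu> where "\<mu> = occ P rho \<gamma> pol"
  define u where "u = (\<lambda>z. Grad \<mu> $ z)"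
  define V where "V = (\<chi> s. Vfun P \<gamma> pol u s)"
  define w where "w = state_occ P rho \<gamma> pol'"
  define r where "r = (\<chi> s. \<Sum>a\<in>UNIV. pol' s a * u (s, a))"
  have discount: "\<bar>\<gamma>\<bar> < 1"
    using assms(3,4) by simp
  have "F (occ P rho \<gamma> pol') - F \<mu> \<le> Grad \<mu> \<bullet> (occ P rho \<gamma> pol' - \<mu>)"
    using assms(5-8)
    by (intro concave_on_imp_below_tangent[where S = "occ_set P rho \<gamma>"]) (auto simp: occ_set_def \<mu>_def)
  also have "\<dots> = w \<bullet> r - (\<chi> s. rho s) \<bullet> V"
    by (simp add: inner_diff_right inner_occ_eq_state_occ[OF assms(1,6) discount]
        inner_occ_eq_Vfun[OF assms(1,5) discount] w_def r_def u_def V_def \<mu>_def)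
  also have "\<dots> = w \<bullet> (r + \<gamma> *\<^sub>R (Pmat P pol' *v V) - V)"
    unfolding w_def by (intro inner_bellman_residual[symmetric] state_occ_fixpoint assms(1,6) discount)
  also have "\<dots> = 1 / (1 - \<gamma>) * (\<Sum>s\<in>UNIV. dstate P rho \<gamma> pol' $ s *
      (bellman P \<gamma> pol' u (Vfun P \<gamma> pol u) s - Vfun P \<gamma> pol u s))"
    using assms(4)
    by (simp add: dstate_eq_state_occ bellman_eq_Pmat inner_vec_def w_def r_def V_def sum_distrib_left)
  finally show ?thesis
    by (simp add: \<mu>_def u_def)
qed

end
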